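(* Let $t_0\in(0,1)$, $\alpha_b\in\mathbb{R}$, $u\in\mathbb{R}$, and put $\alpha_a=(1-u)(-2t_0^2+\alpha_b)+u(2t_0^2+\alpha_b)$, $T=3+t_0^2$, and $F=F(\theta)=1+e^{i\theta_1}+e^{i\theta_2}$ for $\theta\in B=[-\pi,\pi]^2$. Consider the matrix $$M_2^{AA}(\eta,\theta)=\begin{pmatrix}-T\eta-\alpha_a&\bar F&t_0^2&0\\ F&-T\eta-\alpha_b&0&t_0^2\\ t_0^2&0&-T\eta-\alpha_a&\bar F\\ 0&t_0^2&F&-T\eta-\alpha_b\end{pmatrix},$$ and suppose $t_0,\alpha_b$ are such that every root $\eta$ of $\det M_2^{AA}(\eta,\theta)=0$ satisfies $|\eta|\le1$ for all $\theta\in B$. Then the dispersion relation of $H_2^{AA}$ is given by the four branches $$r^{\pm}_{\pm}(\theta)=\frac{\pm\sqrt{|F|^2+t_0^4(1-2u)^2}\pm t_0^2+t_0^2(1-2u)-\alpha_b}{T}$$ (signs chosen independently), and: (a) if $\alpha_a=\alpha_b$, the dispersion relation has Dirac cones; (b) if $\alpha_a=-2t_0^2+\alpha_b$ or $\alpha_a=2t_0^2+\alpha_b$, the dispersion relation has parabolic touches; (c) if $\alpha_a\notin[-2t_0^2+\alpha_b,\,2t_0^2+\alpha_b]$, the dispersion relation has gaps (no two branches touch); (d) if $0<u<1$ and $\alpha_a\ne\alpha_b$, the branches intersect but there are no parabolic or conical touches.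
   Context: $H_2^{AA}$ is the Schrödinger operator $-u''+q_0u$ (with $q_0$ continuous on $[0,1]$ and even, $q_0(x)=q_0(1-x)$) on a periodic quantum graph consisting of two identical hexagonal layers (all edges of length 1) stacked in $AA$ fashion: each type-$A$ vertex of one layer is joined by a vertical edge to the type-$A$ vertex above it, and likewise for type-$B$ vertices. At each vertex $v$ one imposes the modified Neumann (Robin) condition: $u_{a_1}(v)=u_{a_2}(v)=u_{f}(v)/t_0$ for in-layer edges $a_i$ and vertical edges $f$ at $v$, and $\sum_{a}u_a'(v)\pm\sum_f t_0u_f'(v)=\delta_vu(v)$, with $\delta_v=\delta_a$ at type-$A$ and $\delta_v=\delta_b$ at type-$B$ vertices ($t_0\in(0,1]$ models the weak interlayer interaction). Via Floquet theory with quasimomentum $\theta\in B$, for $\lambda$ outside the Dirichlet spectrum of $-d^2/dx^2+q_0$ on $[0,1]$, let $\varphi_0,\varphi_1$ solve $-\varphi''+q_0\varphi=\lambda\varphi$ with $\varphi_0(0)=1,\varphi_0(1)=0,\varphi_1(0)=0,\varphi_1(1)=1$, and set $\eta=\eta(\lambda)=\varphi_1'(1)/\varphi_1'(0)$ (half the Hill discriminant) and $\alpha_k=\delta_k/\varphi_1'(0)$, $k\in\{a,b\}$, treated as real constants. Then $\lambda\in\sigma(H_2^{AA})$ iff $\det M_2^{AA}(\eta(\lambda),\theta)=0$ for some $\theta\in B$; the dispersion relation is identified with the root branches $\eta=r(\theta)$. A Dirac cone is a point $\theta_D$ where two branches meet and there is $\gamma\ne0$ with $r(\theta)-r(\theta_D)=\pm\gamma|\theta-\theta_D|+O(|\theta-\theta_D|^2)$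 on the two branches; a parabolic touch is a point where two branches meet with vanishing first derivative and quadratic behavior around it; "gaps" means the branches are separated (do not touch).
   Formalization: In the definition of a Dirac cone, the distance $|\theta-\theta_D|$ in the linear term is sqrt(h*h + k*k - h*k) for theta - theta_D = (h, k), in place of the Euclidean norm in the coordinates of B. The statement above fails without it. *)

theory Defs
  imports "HOL-Analysis.Analysis" "HOL-Library.Landau_Symbols"
begin

definition Bz :: "(real \<times> real) set" where
  "Bz = {-pi..pi} \<times> {-pi..pi}"

definition Fhex :: "real \<times> real \<Rightarrow> complex" where
  "Fhex \<theta> = 1 + cis (fst \<theta>) + cis (snd \<theta>)"

definition alpha_a :: "real \<Rightarrow> real \<Rightarrow> real \<Rightarrow> real" where
  "alpha_a t0 ab u = (1 - u) * (- 2 * t0^2 + ab) + u * (2 * t0^2 + ab)"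

definition Tc :: "real \<Rightarrow> real" where
  "Tc t0 = 3 + t0^2"

definition M2AA :: "real \<Rightarrow> real \<Rightarrow> real \<Rightarrow> real \<Rightarrow> real \<times> real \<Rightarrow> complex^4^4" where
  "M2AA t0 aa ab \<eta> \<theta> =
     (let F = Fhex \<theta>; T = Tc t0; s = complex_of_real (t0^2);
          da = complex_of_real (- T * \<eta> - aa); db = complex_of_real (- T * \<eta> - ab)
      in vector [vector [da, cnj F, s, 0],
                 vector [F, db, 0, s],
                 vector [s, 0, da, cnj F],
                 vector [0, s, F, db]])"

definition sgnb :: "bool \<Rightarrow> real" where
  "sgnb b = (if b then 1 else -1)"

definition branch :: "real \<Rightarrow> real \<Rightarrow> real \<Rightarrow> bool \<times> bool \<Rightarrow> real \<times> real \<Rightarrow> real" where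
  "branch t0 ab u s \<theta> =
     (sgnb (fst s) * sqrt ((cmod (Fhex \<theta>))^2 + t0^4 * (1 - 2*u)^2)
      + sgnb (snd s) * t0^2 + t0^2 * (1 - 2*u) - ab) / Tc t0"

text \<open>Euclidean distance in physical quasimomentum coordinates (hexagonal reciprocal lattice):
  theta_j = k . a_j with |a_1| = |a_2|, angle 60 degrees; up to a constant factor
  |k|^2 is proportional to h_1^2 + h_2^2 - h_1 h_2.\<close>
definition hexdist :: "real \<times> real \<Rightarrow> real \<times> real \<Rightarrow> real" where
  "hexdist \<theta> \<phi> = (let h1 = fst \<theta> - fst \<phi>; h2 = snd \<theta> - snd \<phi> in sqrt (h1^2 + h2^2 - h1 * h2))"

definition has_dirac_cone :: "('i \<Rightarrow> real \<times> real \<Rightarrow> real) \<Rightarrow> bool" where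
  "has_dirac_cone R \<longleftrightarrow> (\<exists>i j \<theta>D \<gamma>. i \<noteq> j \<and> \<theta>D \<in> Bz \<and> R i \<theta>D = R j \<theta>D \<and> \<gamma> \<noteq> 0 \<and>
      (\<lambda>\<theta>. R i \<theta> - R i \<theta>D - \<gamma> * hexdist \<theta> \<theta>D) \<in> O[at \<theta>D](\<lambda>\<theta>. (norm (\<theta> - \<theta>D))^2) \<and>
      (\<lambda>\<theta>. R j \<theta> - R j \<theta>D + \<gamma> * hexdist \<theta> \<theta>D) \<in> O[at \<theta>D](\<lambda>\<theta>. (norm (\<theta> - \<theta>D))^2))"

definition has_parabolic_touch :: "('i \<Rightarrow> real \<times> real \<Rightarrow> real) \<Rightarrow> bool" where
  "has_parabolic_touch R \<longleftrightarrow> (\<exists>i j \<theta>P. i \<noteq> j \<and> \<theta>P \<in> Bz \<and> R i \<theta>P = R j \<theta>P \<and>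
      (\<forall>k \<in> {i, j}. (R k has_derivative (\<lambda>_. 0)) (at \<theta>P) \<and>
          (\<lambda>\<theta>. R k \<theta> - R k \<theta>P) \<in> \<Theta>[at \<theta>P](\<lambda>\<theta>. (norm (\<theta> - \<theta>P))^2)))"

definition has_gaps :: "('i \<Rightarrow> real \<times> real \<Rightarrow> real) \<Rightarrow> bool" where
  "has_gaps R \<longleftrightarrow> (\<forall>i j. \<forall>\<theta> \<in> Bz. i \<noteq> j \<longrightarrow> R i \<theta> \<noteq> R j \<theta>)"

definition branches_intersect :: "('i \<Rightarrow> real \<times> real \<Rightarrow> real) \<Rightarrow> bool" where
  "branches_intersect R \<longleftrightarrow> (\<exists>i j. \<exists>\<theta> \<in> Bz. i \<noteq> j \<and> R i \<theta> = R j \<theta>)"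

end

theory Submission
  imports Defs "HOL-Probability.Characteristic_Functions"
begin

text \<open>
  The determinant factorises as
  \<open>((d\<^sub>a + t0\<^sup>2)(d\<^sub>b + t0\<^sup>2) - |F|\<^sup>2)((d\<^sub>a - t0\<^sup>2)(d\<^sub>b - t0\<^sup>2) - |F|\<^sup>2)\<close>
  with \<open>d\<^sub>k = -T\<eta> - \<alpha>\<^sub>k\<close>, and each factor is a difference of squares. This gives the
  four branches \<open>(\<plusminus>S \<plusminus> t0\<^sup>2 + c - \<alpha>\<^sub>b) / T\<close> with \<open>S = sqrt (|F|\<^sup>2 + c\<^sup>2)\<close> and
  \<open>c = (\<alpha>\<^sub>b - \<alpha>\<^sub>a) / 2\<close>; two of them can only meet where \<open>S = 0\<close> or \<open>S = t0\<^sup>2\<close>.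

  At the Dirac point \<open>(2\<pi>/3, -2\<pi>/3)\<close> the function \<open>F\<close> vanishes and \<open>|F|\<close> agrees with the
  hexagonal distance to second order. For \<open>c = 0\<close> this is a cone; for \<open>|c| = t0\<^sup>2\<close> the
  difference \<open>S - t0\<^sup>2 \<approx> |F|\<^sup>2 / (2 t0\<^sup>2)\<close> is quadratic; for \<open>|c| > t0\<^sup>2\<close> always \<open>S > t0\<^sup>2\<close>.
  For \<open>0 < |c| < t0\<^sup>2\<close> every branch is smooth, which rules out cones, and branches meet where
  \<open>|F|\<^sup>2 = t0\<^sup>4 - c\<^sup>2 \<in> (0, 1)\<close>; a flat touch there would be a critical point of \<open>|F|\<^sup>2\<close>,
  whose only critical values are 0, 1 and 9.
\<close>

section \<open>Local asymptotics\<close>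

lemma norm_cis_minus_linear_le: "cmod (cis x - 1 - \<i> * complex_of_real x) \<le> x^2 / 2"
proof -
  have "cmod (iexp x - (\<Sum>k \<le> 1. (\<i> * x)^k / fact k)) \<le> \<bar>x\<bar>^2 / fact 2"
    using iexp_approx1[of x 1] by (simp add: numeral_2_eq_2)
  then show ?thesis by (simp add: cis_conv_exp fact_numeral diff_diff_eq)
qed

lemma norm_sq_smallo_norm:
  fixes a :: "'a::real_normed_vector"
  shows "(\<lambda>x. (norm (x - a))^2) \<in> o[at a](\<lambda>x. norm (x - a))"
proof (rule smalloI_tendsto)
  have "((\<lambda>x. norm (x - a)) \<longlongrightarrow> 0) (at a)"
    using LIM_zero_iff tendsto_ident_at tendsto_norm_zero by blast
  moreover have "\<forall>\<^sub>F x in at a. norm (x - a) = (norm (x - a))^2 / norm (x - a)"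
    by (simp add: eventually_at_filter power2_eq_square)
  ultimately show "((\<lambda>x. (norm (x - a))^2 / norm (x - a)) \<longlongrightarrow> 0) (at a)"
    by (rule Lim_transform_eventually)
  show "\<forall>\<^sub>F x in at a. norm (x - a) \<noteq> 0"
    by (simp add: eventually_at_filter)
qed

lemma has_derivative_zero_if_bigo_norm_sq:
  fixes f :: "'a::real_normed_vector \<Rightarrow> real"
  assumes "(\<lambda>x. f x - f a) \<in> O[at a](\<lambda>x. (norm (x - a))^2)"
  shows "(f has_derivative (\<lambda>_. 0)) (at a)"
proof -
  have "(\<lambda>x. f x - f a) \<in> o[at a](\<lambda>x. norm (x - a))"
    using assms norm_sq_smallo_norm by (rule landau_o.big_small_trans)
  then have "((\<lambda>x. (f x - f a) / norm (x - a)) \<longlongrightarrow> 0) (at a)"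
    by (rule smalloD_tendsto)
  then have "((\<lambda>x. norm (f x - f a - 0) / norm (x - a)) \<longlongrightarrow> 0) (at a)"
    using tendsto_norm_zero by fastforce
  then show ?thesis by (simp add: has_derivative_iff_norm)
qed

text \<open>The difference quotient of \<open>\<phi>\<close> behaves like \<open>\<gamma> * sgn (x - a)\<close>, whose one-sided
  limits at \<open>a\<close> differ unless \<open>\<gamma> = 0\<close>.\<close>

lemma differentiable_cusp_coefficient_eq_0:
  fixes \<phi> :: "real \<Rightarrow> real"
  assumes "\<phi> differentiable (at a)"
    and "(\<lambda>x. \<phi> x - \<phi> a - \<gamma> * \<bar>x - a\<bar>) \<in> O[at a](\<lambda>x. (x - a)^2)"
  shows "\<gamma> = 0"
proof -
  obtain E where "(\<phi> has_real_derivative E) (at a)"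
    using assms(1) real_differentiable_def by blast
  then have quotient: "((\<lambda>x. (\<phi> x - \<phi> a) / (x - a)) \<longlongrightarrow> E) (at a)"
    by (simp add: has_field_derivative_iff)
  have "(\<lambda>x. \<phi> x - \<phi> a - \<gamma> * \<bar>x - a\<bar>) \<in> o[at a](\<lambda>x. x - a)"
    using assms(2) norm_sq_smallo_norm[of a] by (simp add: landau_o.big_small_trans)
  then have "((\<lambda>x. (\<phi> x - \<phi> a - \<gamma> * \<bar>x - a\<bar>) / (x - a)) \<longlongrightarrow> 0) (at a)"
    by (rule smalloD_tendsto)
  with quotient have "((\<lambda>x. (\<phi> x - \<phi> a) / (x - a) - (\<phi> x - \<phi> a - \<gamma> * \<bar>x - a\<bar>) / (x - a)) \<longlongrightarrow> E - 0) (at a)"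
    by (rule tendsto_diff)
  moreover have "(\<phi> x - \<phi> a) / (x - a) - (\<phi> x - \<phi> a - \<gamma> * \<bar>x - a\<bar>) / (x - a) = \<gamma> * sgn (x - a)"
    if "x \<noteq> a" for x
    using that by (simp add: diff_divide_distrib[symmetric] sgn_if abs_if field_simps)
  then have "\<forall>\<^sub>F x in at a. (\<phi> x - \<phi> a) / (x - a) - (\<phi> x - \<phi> a - \<gamma> * \<bar>x - a\<bar>) / (x - a) = \<gamma> * sgn (x - a)"
    by (auto simp: eventually_at_filter intro: always_eventually)
  ultimately have "((\<lambda>x. \<gamma> * sgn (x - a)) \<longlongrightarrow> E) (at a)"
    by (simp add: tendsto_cong)
  then have "((\<lambda>x. \<gamma> * sgn (x - a)) \<longlongrightarrow> E) (at_right a)" "((\<lambda>x. \<gamma> * sgn (x - a)) \<longlongrightarrow> E) (at_left a)"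
    by (simp_all add: filterlim_at_split)
  moreover have "((\<lambda>x. \<gamma> * sgn (x - a)) \<longlongrightarrow> \<gamma>) (at_right a)"
    by (rule tendsto_eventually) (simp add: eventually_at_right_field gt_ex)
  moreover have "((\<lambda>x. \<gamma> * sgn (x - a)) \<longlongrightarrow> - \<gamma>) (at_left a)"
    by (rule tendsto_eventually) (simp add: eventually_at_left_field lt_ex)
  ultimately have "\<gamma> = E" "- \<gamma> = E"
    by (auto intro: tendsto_unique[OF trivial_limit_at_right_real] tendsto_unique[OF trivial_limit_at_left_real])
  then show ?thesis by simp
qed

lemma sqrt_sq_add_minus_bounds:
  fixes x t M :: real
  assumes "0 < t" "0 \<le> x" "x \<le> M"
  shows "x^2 / (M + 2*t) \<le> sqrt (x^2 + t^2) - t" "sqrt (x^2 + t^2) - t \<le> x^2 / (2*t)"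
proof -
  define S where "S = sqrt (x^2 + t^2)"
  have prod: "(S - t) * (S + t) = x^2"
    using assms by (simp add: S_def algebra_simps flip: power2_eq_square)
  have "t \<le> S"
    unfolding S_def by (rule real_le_rsqrt) simp
  moreover have "S \<le> x + t"
    unfolding S_def using assms by (intro real_le_lsqrt) (simp_all add: power2_sum)
  ultimately have "(S - t) * (S + t) \<le> (S - t) * (M + 2*t)" "(S - t) * (2*t) \<le> (S - t) * (S + t)"
    using assms by (simp_all add: mult_left_mono)
  then show "x^2 / (M + 2*t) \<le> S - t" "S - t \<le> x^2 / (2*t)"
    using assms prod by (simp_all add: pos_divide_le_eq pos_le_divide_eq)
qed

lemma norm_sq_pair: "(norm (\<theta> - \<phi> :: real \<times> real))^2 = (fst \<theta> - fst \<phi>)^2 + (snd \<theta> - snd \<phi>)^2"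
  by (cases \<theta>; cases \<phi>) (simp add: norm_Pair)

lemma hexagonal_form_nonneg: "0 \<le> (h1::real)^2 + h2^2 - h1 * h2"
proof -
  have "0 \<le> ((h1 - h2)^2 + h1^2 + h2^2) / 2" by simp
  also have "\<dots> = h1^2 + h2^2 - h1 * h2" by (simp add: power2_eq_square field_simps)
  finally show ?thesis .
qed

lemma hexdist_sq:
  "(hexdist \<theta> \<phi>)^2 = (fst \<theta> - fst \<phi>)^2 + (snd \<theta> - snd \<phi>)^2 - (fst \<theta> - fst \<phi>) * (snd \<theta> - snd \<phi>)"
  using hexagonal_form_nonneg[of "fst \<theta> - fst \<phi>" "snd \<theta> - snd \<phi>"] unfolding hexdist_def Let_def by simp

lemma hexdist_nonneg: "0 \<le> hexdist \<theta> \<phi>"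
  using hexagonal_form_nonneg[of "fst \<theta> - fst \<phi>" "snd \<theta> - snd \<phi>"] unfolding hexdist_def Let_def by simp

lemma hexdist_bigtheta:
  fixes F :: "(real \<times> real) filter"
  shows "(\<lambda>\<theta>. hexdist \<theta> \<phi>) \<in> \<Theta>[F](\<lambda>\<theta>. norm (\<theta> - \<phi>))"
proof (rule bigthetaI'[of "1/2" "3/2"], simp, simp, intro always_eventually allI)
  fix \<theta> :: "real \<times> real"
  define h1 where "h1 = fst \<theta> - fst \<phi>"
  define h2 where "h2 = snd \<theta> - snd \<phi>"
  have hex: "(hexdist \<theta> \<phi>)^2 = h1^2 + h2^2 - h1 * h2" and nrm: "(norm (\<theta> - \<phi>))^2 = h1^2 + h2^2"
    by (simp_all add: hexdist_sq norm_sq_pair h1_def h2_def)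
  have "2 * \<bar>h1 * h2\<bar> \<le> h1^2 + h2^2"
    using sum_squares_bound[of "\<bar>h1\<bar>" "\<bar>h2\<bar>"] by (simp add: abs_mult)
  then have "(1/2 * norm (\<theta> - \<phi>))^2 \<le> (hexdist \<theta> \<phi>)^2" "(hexdist \<theta> \<phi>)^2 \<le> (3/2 * norm (\<theta> - \<phi>))^2"
    unfolding hex power_mult_distrib nrm by (simp_all add: power2_eq_square abs_le_iff)
  then show "1/2 * norm (norm (\<theta> - \<phi>)) \<le> norm (hexdist \<theta> \<phi>) \<and> norm (hexdist \<theta> \<phi>) \<le> 3/2 * norm (norm (\<theta> - \<phi>))"
    using hexdist_nonneg[of \<theta> \<phi>] by (auto intro: power2_le_imp_le)
qed

lemma differentiable_hexdist_cusp_coefficient_eq_0: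
  fixes f :: "real \<times> real \<Rightarrow> real"
  assumes "f differentiable (at \<theta>\<^sub>0)"
    and "(\<lambda>\<theta>. f \<theta> - f \<theta>\<^sub>0 - \<gamma> * hexdist \<theta> \<theta>\<^sub>0) \<in> O[at \<theta>\<^sub>0](\<lambda>\<theta>. (norm (\<theta> - \<theta>\<^sub>0))^2)"
  shows "\<gamma> = 0"
proof -
  obtain a b where \<theta>\<^sub>0: "\<theta>\<^sub>0 = (a, b)" by (cases \<theta>\<^sub>0)
  have line: "filterlim (\<lambda>x. (x, b)) (at \<theta>\<^sub>0) (at a)"
    unfolding \<theta>\<^sub>0 by (rule filterlim_atI) (auto intro!: tendsto_eq_intros simp: eventually_at_filter)
  show ?thesis
  proof (rule differentiable_cusp_coefficient_eq_0)
    show "(\<lambda>x. f (x, b)) differentiable (at a)"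
    proof -
      have "(\<lambda>x::real. (x, b)) differentiable (at a)"
        using has_derivative_Pair[OF has_derivative_ident has_derivative_const] differentiable_def by blast
      then show ?thesis
        using differentiable_chain_at[of "\<lambda>x. (x, b)" a f] assms(1) \<theta>\<^sub>0 by (simp add: o_def)
    qed
    show "(\<lambda>x. f (x, b) - f (a, b) - \<gamma> * \<bar>x - a\<bar>) \<in> O[at a](\<lambda>x. (x - a)^2)"
      using landau_o.big.compose[OF assms(2) line]
      by (simp add: \<theta>\<^sub>0 hexdist_def norm_Pair)
  qed
qed

lemma has_dirac_cone_imp_not_differentiable:
  assumes "has_dirac_cone R"
  shows "\<exists>i \<theta>. \<not> R i differentiable (at \<theta>)"
  using assms differentiable_hexdist_cusp_coefficient_eq_0 unfolding has_dirac_cone_def by blast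

section \<open>The Dirac point\<close>

definition dirac_point :: "real \<times> real" where
  "dirac_point = (2*pi/3, -(2*pi/3))"

lemma dirac_point_in_Bz: "dirac_point \<in> Bz"
  unfolding dirac_point_def Bz_def by (simp add: field_simps)

lemma Fhex_dirac_point: "Fhex dirac_point = 0"
  by (simp add: Fhex_def dirac_point_def cis.ctr cos_120 sin_120 complex_eq_iff)

lemma norm_Fhex_sq:
  "(cmod (Fhex \<theta>))^2 = (1 + cos (fst \<theta>) + cos (snd \<theta>))^2 + (sin (fst \<theta>) + sin (snd \<theta>))^2"
  by (simp add: Fhex_def cmod_power2)

lemma norm_Fhex_le_3: "cmod (Fhex \<theta>) \<le> 3"
  using norm_triangle_ineq[of "1 + cis (fst \<theta>)" "cis (snd \<theta>)"] norm_triangle_ineq[of 1 "cis (fst \<theta>)"]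
  by (simp add: Fhex_def)

lemma cis_two_pi_thirds:
  "cis (2*pi/3) = Complex (-1/2) (sqrt 3 / 2)" "cis (-(2*pi/3)) = Complex (-1/2) (- (sqrt 3 / 2))"
  by (simp_all add: cis.ctr cos_120 sin_120)

lemma norm_dirac_linear_part:
  "cmod (cis (2*pi/3) * h1 + cis (-(2*pi/3)) * h2) = sqrt (h1^2 + h2^2 - h1 * h2)"
proof -
  have "cis (2*pi/3) * h1 + cis (-(2*pi/3)) * h2 = Complex (- (h1 + h2) / 2) (sqrt 3 / 2 * (h1 - h2))"
    unfolding cis_two_pi_thirds by (simp add: complex_eq_iff field_simps)
  moreover have "(- (h1 + h2) / 2)^2 + (sqrt 3 / 2 * (h1 - h2))^2 = h1^2 + h2^2 - h1 * h2"
    by (simp add: power2_eq_square field_simps)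
  ultimately show ?thesis by (simp add: cmod_def)
qed

lemma Fhex_dirac_linearization:
  "\<bar>cmod (Fhex \<theta>) - hexdist \<theta> dirac_point\<bar> \<le> (norm (\<theta> - dirac_point))^2 / 2"
proof -
  obtain h1 h2 where h: "\<theta> - dirac_point = (h1, h2)" by (cases "\<theta> - dirac_point")
  define \<omega> where "\<omega> = cis (2*pi/3)"
  define \<omega>' where "\<omega>' = cis (-(2*pi/3))"
  define L where "L = \<i> * (\<omega> * h1 + \<omega>' * h2)"
  have \<theta>: "\<theta> = (2*pi/3 + h1, -(2*pi/3) + h2)"
    using h by (cases \<theta>) (simp add: dirac_point_def)
  have "1 + \<omega> + \<omega>' = 0"
    unfolding \<omega>_def \<omega>'_def cis_two_pi_thirds by (simp add: complex_eq_iff)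
  moreover have "cis (2*pi/3 + h1) = \<omega> * cis h1" "cis (-(2*pi/3) + h2) = \<omega>' * cis h2"
    by (simp_all add: \<omega>_def \<omega>'_def cis_mult)
  ultimately have "Fhex \<theta> - L = \<omega> * (cis h1 - 1 - \<i> * h1) + \<omega>' * (cis h2 - 1 - \<i> * h2)"
    unfolding Fhex_def \<theta> L_def fst_conv snd_conv by (simp add: algebra_simps)
  then have "cmod (Fhex \<theta> - L) \<le> cmod (\<omega> * (cis h1 - 1 - \<i> * h1)) + cmod (\<omega>' * (cis h2 - 1 - \<i> * h2))"
    by (metis norm_triangle_ineq)
  also have "\<dots> \<le> h1^2 / 2 + h2^2 / 2"
    using norm_cis_minus_linear_le[of h1] norm_cis_minus_linear_le[of h2]
    by (simp add: \<omega>_def \<omega>'_def norm_mult)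
  finally have "cmod (Fhex \<theta> - L) \<le> h1^2 / 2 + h2^2 / 2" .
  moreover have "cmod L = hexdist \<theta> dirac_point"
    using h by (simp add: L_def \<omega>_def \<omega>'_def norm_mult norm_dirac_linear_part hexdist_def Let_def
        flip: fst_diff snd_diff)
  moreover have "(norm (\<theta> - dirac_point))^2 = h1^2 + h2^2"
    by (simp add: h norm_Pair)
  ultimately show ?thesis
    using norm_triangle_ineq3[of "Fhex \<theta>" L] by simp
qed

lemma norm_Fhex_minus_hexdist_bigo:
  "(\<lambda>\<theta>. cmod (Fhex \<theta>) - hexdist \<theta> dirac_point) \<in> O[at dirac_point](\<lambda>\<theta>. (norm (\<theta> - dirac_point))^2)"
proof (intro bigoI[of _ "1/2"] always_eventually allI)
  fix \<theta>
  show "norm (cmod (Fhex \<theta>) - hexdist \<theta> dirac_point) \<le> 1/2 * norm ((norm (\<theta> - dirac_point))^2)"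
    using Fhex_dirac_linearization[of \<theta>] by simp
qed

lemma norm_Fhex_asymp_equiv_hexdist:
  "(\<lambda>\<theta>. cmod (Fhex \<theta>)) \<sim>[at dirac_point] (\<lambda>\<theta>. hexdist \<theta> dirac_point)"
proof (rule smallo_imp_asymp_equiv)
  have "(\<lambda>\<theta>. cmod (Fhex \<theta>) - hexdist \<theta> dirac_point) \<in> o[at dirac_point](\<lambda>\<theta>. norm (\<theta> - dirac_point))"
    using norm_Fhex_minus_hexdist_bigo norm_sq_smallo_norm by (rule landau_o.big_small_trans)
  then show "(\<lambda>\<theta>. cmod (Fhex \<theta>) - hexdist \<theta> dirac_point) \<in> o[at dirac_point](\<lambda>\<theta>. hexdist \<theta> dirac_point)"
    using hexdist_bigtheta by (rule landau_o.small.bigtheta_trans1[OF _ bigtheta_sym[THEN iffD1]])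
qed

lemma norm_Fhex_bigtheta:
  "(\<lambda>\<theta>. cmod (Fhex \<theta>)) \<in> \<Theta>[at dirac_point](\<lambda>\<theta>. norm (\<theta> - dirac_point))"
  using asymp_equiv_imp_bigtheta[OF norm_Fhex_asymp_equiv_hexdist] hexdist_bigtheta
  by (rule landau_theta.trans)

lemma norm_Fhex_sq_bigtheta:
  "(\<lambda>\<theta>. (cmod (Fhex \<theta>))^2) \<in> \<Theta>[at dirac_point](\<lambda>\<theta>. (norm (\<theta> - dirac_point))^2)"
  using norm_Fhex_bigtheta
  by (auto intro!: bigthetaI landau_o.big_power landau_omega.big_power dest: bigthetaD1 bigthetaD2)

lemma sqrt_norm_Fhex_sq_add_bigtheta:
  assumes "0 < t"
  shows "(\<lambda>\<theta>. sqrt ((cmod (Fhex \<theta>))^2 + t^2) - t) \<in> \<Theta>[at dirac_point](\<lambda>\<theta>. (norm (\<theta> - dirac_point))^2)"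
proof -
  have "1 / (3 + 2*t) * norm ((cmod (Fhex \<theta>))^2) \<le> norm (sqrt ((cmod (Fhex \<theta>))^2 + t^2) - t) \<and>
      norm (sqrt ((cmod (Fhex \<theta>))^2 + t^2) - t) \<le> 1 / (2*t) * norm ((cmod (Fhex \<theta>))^2)" for \<theta>
  proof -
    note bounds = sqrt_sq_add_minus_bounds[OF assms norm_ge_zero norm_Fhex_le_3[of \<theta>]]
    moreover have "0 \<le> (cmod (Fhex \<theta>))^2 / (3 + 2*t)" using assms by simp
    ultimately show ?thesis by simp
  qed
  then have "(\<lambda>\<theta>. sqrt ((cmod (Fhex \<theta>))^2 + t^2) - t) \<in> \<Theta>[at dirac_point](\<lambda>\<theta>. (cmod (Fhex \<theta>))^2)"
    using assms by (intro bigthetaI'[of "1 / (3 + 2*t)" "1 / (2*t)"] always_eventually allI) simp_all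
  then show ?thesis
    using norm_Fhex_sq_bigtheta by (rule landau_theta.trans)
qed

section \<open>Critical values of \<open>|F|\<^sup>2\<close>\<close>

text \<open>\<open>X, Y\<close> and \<open>U, V\<close> stand for cosine and sine of the two quasimomenta; the last two
  hypotheses say that both partial derivatives of \<open>|F|\<^sup>2\<close> vanish.\<close>

lemma unit_circle_critical_value:
  fixes X Y U V :: real
  assumes "X^2 + Y^2 = 1" "U^2 + V^2 = 1"
    and "(1 + X + U) * Y = (Y + V) * X" "(1 + X + U) * V = (Y + V) * U"
  shows "(1 + X + U)^2 + (Y + V)^2 \<in> {0, 1, 9}"
proof -
  have V: "V = -Y" using assms(3,4) by (simp add: algebra_simps)
  then have "(1 + X + U) * Y = 0" using assms(3) by (simp add: algebra_simps)
  then consider "1 + X + U = 0" | "Y = 0" by auto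
  then show ?thesis
  proof cases
    case 2
    with assms(1,2) V have "X = 1 \<or> X = -1" "U = 1 \<or> U = -1"
      by (simp_all add: power2_eq_1_iff)
    with 2 V show ?thesis by auto
  qed (simp add: V)
qed

lemma has_derivative_norm_Fhex_sq:
  "((\<lambda>\<theta>. (cmod (Fhex \<theta>))^2) has_derivative
     (\<lambda>h. (2 * (sin x + sin y) * cos x - 2 * (1 + cos x + cos y) * sin x) * fst h
              + (2 * (sin x + sin y) * cos y - 2 * (1 + cos x + cos y) * sin y) * snd h)) (at (x, y))"
  unfolding norm_Fhex_sq by (auto intro!: derivative_eq_intros simp: fun_eq_iff algebra_simps)

lemma norm_Fhex_sq_critical_value:
  assumes "((\<lambda>\<theta>. (cmod (Fhex \<theta>))^2) has_derivative (\<lambda>_. 0)) (at \<theta>)"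
  shows "(cmod (Fhex \<theta>))^2 \<in> {0, 1, 9}"
proof -
  obtain x y where \<theta>: "\<theta> = (x, y)" by (cases \<theta>)
  have "(\<lambda>h. (2 * (sin x + sin y) * cos x - 2 * (1 + cos x + cos y) * sin x) * fst h
              + (2 * (sin x + sin y) * cos y - 2 * (1 + cos x + cos y) * sin y) * snd h) = (\<lambda>_. 0)"
    using has_derivative_norm_Fhex_sq assms unfolding \<theta> by (rule has_derivative_unique)
  from fun_cong[OF this, of "(1, 0)"] fun_cong[OF this, of "(0, 1)"] show ?thesis
    using unit_circle_critical_value[of "cos x" "sin x" "cos y" "sin y"]
    by (simp add: norm_Fhex_sq \<theta> algebra_simps)
qed

lemma norm_Fhex_sq_differentiable: "(\<lambda>\<theta>. (cmod (Fhex \<theta>))^2) differentiable (at \<theta>)"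
  using has_derivative_norm_Fhex_sq[of "fst \<theta>" "snd \<theta>"] unfolding differentiable_def by auto

section \<open>The determinant and the four branches\<close>

lemma vector_4 [simp]:
  "(vector [x, y, z, w] :: 'a::zero^4) $ 1 = x"
  "(vector [x, y, z, w] :: 'a::zero^4) $ 2 = y"
  "(vector [x, y, z, w] :: 'a::zero^4) $ 3 = z"
  "(vector [x, y, z, w] :: 'a::zero^4) $ 4 = w"
  unfolding vector_def by simp_all

lemma det_M2AA:
  "det (M2AA t0 aa ab \<eta> \<theta>) = complex_of_real
     (((- Tc t0 * \<eta> - aa + t0^2) * (- Tc t0 * \<eta> - ab + t0^2) - (cmod (Fhex \<theta>))^2) *
      ((- Tc t0 * \<eta> - aa - t0^2) * (- Tc t0 * \<eta> - ab - t0^2) - (cmod (Fhex \<theta>))^2))"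
proof -
  have f1: "finite {2::4, 3, 4}" "1 \<notin> {2::4, 3, 4}" by auto
  have f2: "finite {3::4, 4}" "2 \<notin> {3::4, 4}" by auto
  have f3: "finite {4::4}" "3 \<notin> {4::4}" by auto
  have "det (M2AA t0 aa ab \<eta> \<theta>) =
     (let F = Fhex \<theta>; s = complex_of_real (t0^2);
          da = complex_of_real (- Tc t0 * \<eta> - aa); db = complex_of_real (- Tc t0 * \<eta> - ab)
      in ((da + s) * (db + s) - F * cnj F) * ((da - s) * (db - s) - F * cnj F))"
    unfolding det_def UNIV_4 M2AA_def Let_def
      sum_over_permutations_insert[OF f1] sum_over_permutations_insert[OF f2]
      sum_over_permutations_insert[OF f3] permutes_sing
    by (simp add: sign_swap_id permutation_swap_id sign_compose sign_id swap_id_eq permutation_compose)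
      (simp add: algebra_simps)
  then show ?thesis
    by (simp add: Let_def flip: complex_norm_square)
qed

definition detuning :: "real \<Rightarrow> real \<Rightarrow> real" where
  "detuning t0 u = t0^2 * (1 - 2*u)"

lemma alpha_a_eq_detuning: "alpha_a t0 ab u = ab - 2 * detuning t0 u"
  unfolding alpha_a_def detuning_def by (simp add: algebra_simps)

lemma Tc_pos: "0 < Tc t0"
  by (simp add: Tc_def add_pos_nonneg)

lemma branch_eq:
  "branch t0 ab u s \<theta> = (sgnb (fst s) * sqrt ((cmod (Fhex \<theta>))^2 + (detuning t0 u)^2)
      + sgnb (snd s) * t0^2 + detuning t0 u - ab) / Tc t0"
proof -
  have "t0^4 * (1 - 2*u)^2 = (t0^2 * (1 - 2*u))^2" by algebra
  then show ?thesis unfolding branch_def detuning_def by (simp add: algebra_simps)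
qed

lemma quartic_eq_0_iff_branch:
  fixes T Q c t b \<eta> :: real
  assumes "0 < T" "0 \<le> Q"
  shows "((- T*\<eta> - (b - 2*c) + t) * (- T*\<eta> - b + t) - Q) * ((- T*\<eta> - (b - 2*c) - t) * (- T*\<eta> - b - t) - Q) = 0
     \<longleftrightarrow> (\<exists>s. \<eta> = (sgnb (fst s) * sqrt (Q + c^2) + sgnb (snd s) * t + c - b) / T)"
proof -
  define S where "S = sqrt (Q + c^2)"
  have "S * S = Q + c * c" using assms(2) by (simp add: S_def flip: power2_eq_square)
  then have factors:
    "(- T*\<eta> - (b - 2*c) + t) * (- T*\<eta> - b + t) - Q = (- T*\<eta> - b + t + c - S) * (- T*\<eta> - b + t + c + S)"
    "(- T*\<eta> - (b - 2*c) - t) * (- T*\<eta> - b - t) - Q = (- T*\<eta> - b - t + c - S) * (- T*\<eta> - b - t + c + S)"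
    by (simp_all add: algebra_simps)
  have solve: "\<eta> = A / T \<longleftrightarrow> T * \<eta> = A" for A
    using assms(1) by (auto simp: field_simps)
  show ?thesis
    unfolding factors S_def[symmetric] mult_eq_0_iff solve split_paired_Ex ex_bool_eq
    by (simp add: sgnb_def) linarith
qed

lemma det_M2AA_eq_0_iff_branch:
  "det (M2AA t0 (alpha_a t0 ab u) ab \<eta> \<theta>) = 0 \<longleftrightarrow> (\<exists>s. \<eta> = branch t0 ab u s \<theta>)"
  using quartic_eq_0_iff_branch[OF Tc_pos, of "(cmod (Fhex \<theta>))^2" t0 \<eta> ab "detuning t0 u" "t0^2"]
  unfolding det_M2AA of_real_eq_0_iff by (simp add: alpha_a_eq_detuning branch_eq)

lemma branch_coincidence:
  assumes "i \<noteq> j" "branch t0 ab u i \<theta> = branch t0 ab u j \<theta>" "t0 \<noteq> 0"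
  shows "sqrt ((cmod (Fhex \<theta>))^2 + (detuning t0 u)^2) \<in> {0, t0^2}"
proof -
  define S where "S = sqrt ((cmod (Fhex \<theta>))^2 + (detuning t0 u)^2)"
  have "sgnb (fst i) * S + sgnb (snd i) * t0^2 = sgnb (fst j) * S + sgnb (snd j) * t0^2"
    using assms(2) Tc_pos[of t0] by (simp add: branch_eq S_def[symmetric])
  moreover have "0 \<le> S" "0 < t0^2" using assms(3) by (simp_all add: S_def)
  ultimately show ?thesis
    using assms(1) unfolding S_def[symmetric]
    by (cases "fst i"; cases "snd i"; cases "fst j"; cases "snd j") (auto simp: sgnb_def prod_eq_iff)
qed

text \<open>A branch \<open>r\<close> determines \<open>|F|\<^sup>2\<close> as \<open>(Tc t0 * r - K)\<^sup>2 - c\<^sup>2\<close>, so a flat point of a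
  branch is a critical point of \<open>|F|\<^sup>2\<close>.\<close>

lemma branch_critical_value:
  assumes "(branch t0 ab u s has_derivative (\<lambda>_. 0)) (at \<theta>)"
  shows "(cmod (Fhex \<theta>))^2 \<in> {0, 1, 9}"
proof -
  define K where "K = sgnb (snd s) * t0^2 + detuning t0 u - ab"
  have "(sgnb (fst s))^2 = 1" by (simp add: sgnb_def)
  then have "(cmod (Fhex \<theta>'))^2 = (Tc t0 * branch t0 ab u s \<theta>' - K)^2 - (detuning t0 u)^2" for \<theta>'
    using Tc_pos[of t0] by (simp add: branch_eq K_def power_mult_distrib)
  then have "(\<lambda>\<theta>'. (cmod (Fhex \<theta>'))^2) = (\<lambda>\<theta>'. (Tc t0 * branch t0 ab u s \<theta>' - K)^2 - (detuning t0 u)^2)"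
    by (rule ext)
  moreover have "((\<lambda>\<theta>'. (Tc t0 * branch t0 ab u s \<theta>' - K)^2 - (detuning t0 u)^2) has_derivative (\<lambda>_. 0)) (at \<theta>)"
    by (auto intro!: derivative_eq_intros assms)
  ultimately show ?thesis
    by (intro norm_Fhex_sq_critical_value) simp
qed

lemma branch_differentiable:
  assumes "detuning t0 u \<noteq> 0"
  shows "branch t0 ab u s differentiable (at \<theta>)"
proof -
  define q where "q \<theta> = (cmod (Fhex \<theta>))^2 + (detuning t0 u)^2" for \<theta>
  have "0 < q \<theta>" using assms by (simp add: q_def add_nonneg_pos)
  then have "sqrt differentiable (at (q \<theta>))"
    using DERIV_real_sqrt real_differentiable_def by blast
  moreover have "q differentiable (at \<theta>)"
    unfolding q_def by (intro derivative_intros norm_Fhex_sq_differentiable)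
  ultimately have "(\<lambda>\<theta>. sqrt (q \<theta>)) differentiable (at \<theta>)"
    by (rule differentiable_compose)
  moreover have "branch t0 ab u s = (\<lambda>\<theta>. (sgnb (fst s) * sqrt (q \<theta>) + sgnb (snd s) * t0^2 + detuning t0 u - ab) / Tc t0)"
    by (simp add: fun_eq_iff branch_eq q_def)
  ultimately show ?thesis
    using Tc_pos[of t0] by simp
qed

section \<open>Cones, touches and gaps\<close>

lemma abs_detuning_less:
  assumes "t0 \<noteq> 0" "0 < u" "u < 1"
  shows "\<bar>detuning t0 u\<bar> < t0^2"
proof -
  have "\<bar>1 - 2*u\<bar> < 1" using assms(2,3) by simp
  then show ?thesis using assms(1) by (simp add: detuning_def abs_mult)
qed

lemma branch_has_dirac_cone:
  assumes "detuning t0 u = 0"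
  shows "has_dirac_cone (branch t0 ab u)"
proof -
  define T where "T = Tc t0"
  have T: "T \<noteq> 0" using Tc_pos[of t0] by (simp add: T_def)
  have upper: "branch t0 ab u (True, True) = (\<lambda>\<theta>. (cmod (Fhex \<theta>) + (t0^2 - ab)) / T)"
    and lower: "branch t0 ab u (False, True) = (\<lambda>\<theta>. (- cmod (Fhex \<theta>) + (t0^2 - ab)) / T)"
    by (simp_all add: fun_eq_iff branch_eq assms sgnb_def T_def)
  have up: "(\<lambda>\<theta>. (cmod (Fhex \<theta>) - hexdist \<theta> dirac_point) / T) \<in> O[at dirac_point](\<lambda>\<theta>. (norm (\<theta> - dirac_point))^2)"
    using norm_Fhex_minus_hexdist_bigo T by simp
  have down: "(\<lambda>\<theta>. - (cmod (Fhex \<theta>) - hexdist \<theta> dirac_point) / T) \<in> O[at dirac_point](\<lambda>\<theta>. (norm (\<theta> - dirac_point))^2)"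
    unfolding landau_o.big.cdiv_in_iff'[OF T] landau_o.big.uminus_in_iff by (rule norm_Fhex_minus_hexdist_bigo)
  show ?thesis
    unfolding has_dirac_cone_def
    by (rule exI[of _ "(True, True)"], rule exI[of _ "(False, True)"], rule exI[of _ dirac_point], rule exI[of _ "1 / T"])
      (use up down in \<open>simp add: upper lower dirac_point_in_Bz Fhex_dirac_point T diff_divide_distrib add_divide_distrib\<close>)
qed

lemma branch_has_parabolic_touch:
  assumes "t0 \<noteq> 0" "\<bar>detuning t0 u\<bar> = t0^2"
  shows "has_parabolic_touch (branch t0 ab u)"
proof -
  define T where "T = Tc t0"
  define t where "t = t0^2"
  define g where "g \<theta> = sqrt ((cmod (Fhex \<theta>))^2 + t^2) - t" for \<theta>
  have T: "T \<noteq> 0" using Tc_pos[of t0] by (simp add: T_def)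
  have t: "0 < t" using assms(1) by (simp add: t_def)
  have c: "(detuning t0 u)^2 = t^2" using assms(2) by (metis power2_abs t_def)
  have g: "g \<in> \<Theta>[at dirac_point](\<lambda>\<theta>. (norm (\<theta> - dirac_point))^2)"
    unfolding g_def using t by (rule sqrt_norm_Fhex_sq_add_bigtheta)
  have g0: "g dirac_point = 0" using t by (simp add: g_def Fhex_dirac_point)
  have R: "branch t0 ab u (True, False) \<theta> = (g \<theta> + detuning t0 u - ab) / T"
    "branch t0 ab u (False, True) \<theta> = (- g \<theta> + detuning t0 u - ab) / T" for \<theta>
    by (simp_all add: branch_eq c g_def sgnb_def T_def t_def algebra_simps)
  have "(\<lambda>\<theta>. branch t0 ab u (True, False) \<theta> - branch t0 ab u (True, False) dirac_point) = (\<lambda>\<theta>. g \<theta> / T)"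
    "(\<lambda>\<theta>. branch t0 ab u (False, True) \<theta> - branch t0 ab u (False, True) dirac_point) = (\<lambda>\<theta>. - g \<theta> / T)"
    using T by (simp_all add: R g0 fun_eq_iff field_simps)
  then have quadratic: "(\<lambda>\<theta>. branch t0 ab u k \<theta> - branch t0 ab u k dirac_point) \<in> \<Theta>[at dirac_point](\<lambda>\<theta>. (norm (\<theta> - dirac_point))^2)"
    if "k \<in> {(True, False), (False, True)}" for k
    using that g T by auto
  show ?thesis
    unfolding has_parabolic_touch_def
  proof (rule exI[of _ "(True, False)"], rule exI[of _ "(False, True)"], rule exI[of _ dirac_point], intro conjI ballI)
    show "branch t0 ab u (True, False) dirac_point = branch t0 ab u (False, True) dirac_point"
      by (simp add: R g0)
    fix k assume "k \<in> {(True, False), (False, True)}"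
    from quadratic[OF this] show "(branch t0 ab u k has_derivative (\<lambda>_. 0)) (at dirac_point)"
      by (intro has_derivative_zero_if_bigo_norm_sq bigthetaD1)
    from quadratic[OF \<open>k \<in> _\<close>]
    show "(\<lambda>\<theta>. branch t0 ab u k \<theta> - branch t0 ab u k dirac_point)
        \<in> \<Theta>[at dirac_point](\<lambda>\<theta>. (norm (\<theta> - dirac_point))^2)" .
  qed (simp_all add: dirac_point_in_Bz)
qed

lemma branch_has_gaps:
  assumes "t0^2 < \<bar>detuning t0 u\<bar>"
  shows "has_gaps (branch t0 ab u)"
  unfolding has_gaps_def
proof (intro allI ballI impI notI)
  fix i j \<theta>
  assume "i \<noteq> j" "branch t0 ab u i \<theta> = branch t0 ab u j \<theta>"
  moreover have "t0 \<noteq> 0" using assms by (auto simp: detuning_def)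
  ultimately have S: "sqrt ((cmod (Fhex \<theta>))^2 + (detuning t0 u)^2) \<in> {0, t0^2}"
    by (rule branch_coincidence)
  then have "sqrt ((cmod (Fhex \<theta>))^2 + (detuning t0 u)^2) \<le> t0^2"
    by auto
  moreover have "\<bar>detuning t0 u\<bar> \<le> sqrt ((cmod (Fhex \<theta>))^2 + (detuning t0 u)^2)"
    by (rule real_le_rsqrt) simp
  ultimately show False
    using assms by linarith
qed

lemma branches_intersect_branch:
  assumes "\<bar>detuning t0 u\<bar> \<le> t0^2" "t0^2 \<le> 3"
  shows "branches_intersect (branch t0 ab u)"
proof -
  define c where "c = detuning t0 u"
  define t where "t = t0^2"
  define r where "r = sqrt (t^2 - c^2)"
  define x where "x = arccos ((r - 1) / 2)"
  have "\<bar>c\<bar> \<le> \<bar>t\<bar>" using assms(1) by (simp add: c_def t_def)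
  then have "c^2 \<le> t^2" by (simp add: abs_le_square_iff)
  then have r: "0 \<le> r" "r \<le> t" "r^2 = t^2 - c^2"
    using assms(1) by (auto simp: r_def t_def intro: real_le_lsqrt)
  then have "-1 \<le> (r - 1) / 2" "(r - 1) / 2 \<le> 1" using assms(2) by (simp_all add: t_def)
  then have "cos x = (r - 1) / 2" "0 \<le> x" "x \<le> pi"
    by (simp_all add: x_def arccos_lbound arccos_ubound)
  then have "(x, -x) \<in> Bz" "(cmod (Fhex (x, -x)))^2 = r^2"
    by (simp_all add: Bz_def norm_Fhex_sq field_simps)
  moreover have "0 \<le> t" by (simp add: t_def)
  ultimately have "sqrt ((cmod (Fhex (x, -x)))^2 + c^2) = t"
    using r by simp
  then have "branch t0 ab u (True, False) (x, -x) = branch t0 ab u (False, True) (x, -x)"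
    by (simp add: branch_eq sgnb_def c_def t_def)
  with \<open>(x, -x) \<in> Bz\<close> show ?thesis
    unfolding branches_intersect_def by blast
qed

lemma branch_no_parabolic_touch:
  assumes "detuning t0 u \<noteq> 0" "\<bar>detuning t0 u\<bar> < t0^2" "t0^2 < 1"
  shows "\<not> has_parabolic_touch (branch t0 ab u)"
proof
  assume "has_parabolic_touch (branch t0 ab u)"
  then obtain i j \<theta> where ij: "i \<noteq> j" "branch t0 ab u i \<theta> = branch t0 ab u j \<theta>"
    and flat: "(branch t0 ab u i has_derivative (\<lambda>_. 0)) (at \<theta>)"
    unfolding has_parabolic_touch_def by blast
  define S where "S = sqrt ((cmod (Fhex \<theta>))^2 + (detuning t0 u)^2)"
  have "t0 \<noteq> 0" using assms(2) by auto
  with ij have "S \<in> {0, t0^2}" unfolding S_def by (rule branch_coincidence)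
  moreover have "0 < S" using assms(1) by (simp add: S_def add_nonneg_pos)
  ultimately have "S^2 = (t0^2)^2" by auto
  then have "(cmod (Fhex \<theta>))^2 = (t0^2)^2 - (detuning t0 u)^2" by (simp add: S_def)
  moreover have "(detuning t0 u)^2 < (t0^2)^2"
    using power_strict_mono[OF assms(2) abs_ge_zero, of 2] by simp
  moreover have "(t0^2)^2 < 1"
    using power_strict_mono[OF assms(3) zero_le_power2, of 2] by simp
  ultimately have "0 < (cmod (Fhex \<theta>))^2" "(cmod (Fhex \<theta>))^2 < 1"
    using zero_le_power2[of "detuning t0 u"] by linarith+
  moreover have "(cmod (Fhex \<theta>))^2 \<in> {0, 1, 9}"
    using flat by (rule branch_critical_value)
  ultimately show False by auto
qed

lemma branch_no_dirac_cone:
  assumes "detuning t0 u \<noteq> 0"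
  shows "\<not> has_dirac_cone (branch t0 ab u)"
  using has_dirac_cone_imp_not_differentiable branch_differentiable[OF assms] by blast

theorem mainTheorem2:
  fixes t0 ab u :: real
  defines "aa \<equiv> alpha_a t0 ab u"
  assumes t0: "0 < t0" "t0 < 1"
    and roots_bounded: "\<forall>\<theta> \<in> Bz. \<forall>\<eta>::real. det (M2AA t0 aa ab \<eta> \<theta>) = 0 \<longrightarrow> \<bar>\<eta>\<bar> \<le> 1"
  shows "(\<forall>\<theta> \<in> Bz. \<forall>\<eta>::real. det (M2AA t0 aa ab \<eta> \<theta>) = 0 \<longleftrightarrow> (\<exists>s. \<eta> = branch t0 ab u s \<theta>))
    \<and> (aa = ab \<longrightarrow> has_dirac_cone (branch t0 ab u))
    \<and> ((aa = - 2 * t0^2 + ab \<or> aa = 2 * t0^2 + ab) \<longrightarrow> has_parabolic_touch (branch t0 ab u))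
    \<and> (aa \<notin> {- 2 * t0^2 + ab .. 2 * t0^2 + ab} \<longrightarrow> has_gaps (branch t0 ab u))
    \<and> ((0 < u \<and> u < 1 \<and> aa \<noteq> ab) \<longrightarrow>
         branches_intersect (branch t0 ab u) \<and> \<not> has_parabolic_touch (branch t0 ab u)
         \<and> \<not> has_dirac_cone (branch t0 ab u))"
proof -
  have aa: "aa = ab - 2 * detuning t0 u"
    by (simp add: aa_def alpha_a_eq_detuning)
  have t0_sq: "0 < t0^2" "t0^2 < 1"
    using t0 by (simp_all add: power_less_one_iff)
  show ?thesis
  proof (intro conjI impI ballI allI)
    show "det (M2AA t0 aa ab \<eta> \<theta>) = 0 \<longleftrightarrow> (\<exists>s. \<eta> = branch t0 ab u s \<theta>)" for \<theta> \<eta>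
      unfolding aa_def by (rule det_M2AA_eq_0_iff_branch)
    show "has_dirac_cone (branch t0 ab u)" if "aa = ab"
      using that aa by (intro branch_has_dirac_cone) simp
    show "has_parabolic_touch (branch t0 ab u)" if "aa = - 2 * t0^2 + ab \<or> aa = 2 * t0^2 + ab"
    proof (rule branch_has_parabolic_touch)
      from that aa have "detuning t0 u = t0^2 \<or> detuning t0 u = -(t0^2)" by auto
      then show "\<bar>detuning t0 u\<bar> = t0^2" by auto
    qed (use t0 in simp)
    show "has_gaps (branch t0 ab u)" if "aa \<notin> {- 2 * t0^2 + ab .. 2 * t0^2 + ab}"
      using that aa by (intro branch_has_gaps) (auto simp: abs_if)
    assume "0 < u \<and> u < 1 \<and> aa \<noteq> ab"
    then have c: "detuning t0 u \<noteq> 0" "\<bar>detuning t0 u\<bar> < t0^2"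
      using aa abs_detuning_less[of t0 u] t0(1) by auto
    show "branches_intersect (branch t0 ab u)"
      using c t0_sq by (intro branches_intersect_branch) simp_all
    show "\<not> has_parabolic_touch (branch t0 ab u)"
      using c t0_sq by (intro branch_no_parabolic_touch)
    show "\<not> has_dirac_cone (branch t0 ab u)"
      using c by (intro branch_no_dirac_cone)
  qed
qed

end
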